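(* Let $(X,d,A)$ be a metric pair with $(X,d)$ complete. Then $(\overline{D}_\infty(X,A),W_\infty)$ is complete.
   Context: A metric on $X$ is a map $d:X\times X\to[0,\infty]$ with $d(x,x)=0$, symmetry and the triangle inequality (infinite distances allowed, $d(x,y)=0$ need not imply $x=y$, so limits need not be unique); complete means every Cauchy sequence converges. A metric pair $(X,d,A)$ is such a space with a closed subset $A$. Write $d(x,A)=\inf_{a\in A}d(x,a)$, $A^\delta=\{x:d(x,A)<\delta\}$. $\overline{D}(X,A)$ is the set of countable formal sums $\hat\alpha=\sum_{i\in I}x_i$ of points of $X\setminus A$ (repetitions allowed). A matching of $\hat\alpha=\sum_{i\in I}x_i$, $\hat\beta=\sum_{j\in J}y_j$ is a formal sum $\sum_{k\in K}(x_k,y_{\varphi(k)})+\sum_{i\in I\setminus K}(x_i,z_i)+\sum_{j\in J\setminus\varphi(K)}(w_j,y_j)$ with $K\subset I$, $\varphi$ injective, $z_i,w_j\in A$; its $\infty$-cost is the supremum of the distances of paired points, and $W_\infty(\alpha,\beta)$ is the infimum of $\infty$-costs over matchings. $u_\delta(\alpha)$ is the restriction of $\hat\alpha$ to $X\setminus A^\delta$, and $\overline{D}_\infty(X,A)=\{\alpha\in\overline{D}(X,A):|u_\delta(\alpha)|<\infty\text{ for all }\delta>0\}$. *)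

theory Defs
  imports "HOL-Analysis.Analysis"
begin

text \<open>Extended pseudometrics: values in [0,\<infinity>] (ennreal), d x y = 0 need not imply x = y.
  The ambient space X is the whole type 'a.\<close>
definition ext_metric :: "('a \<Rightarrow> 'a \<Rightarrow> ennreal) \<Rightarrow> bool" where
  "ext_metric d \<longleftrightarrow> (\<forall>x. d x x = 0) \<and> (\<forall>x y. d x y = d y x)
     \<and> (\<forall>x y z. d x z \<le> d x y + d y z)"

definition dist_set :: "('a \<Rightarrow> 'a \<Rightarrow> ennreal) \<Rightarrow> 'a \<Rightarrow> 'a set \<Rightarrow> ennreal" where
  "dist_set d x A = (INF a\<in>A. d x a)"

text \<open>Closed in the topology of open balls: contains every point at distance 0 from it.\<close>
definition closed_wrt :: "('a \<Rightarrow> 'a \<Rightarrow> ennreal) \<Rightarrow> 'a set \<Rightarrow> bool" where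
  "closed_wrt d A \<longleftrightarrow> (\<forall>x. dist_set d x A = 0 \<longrightarrow> x \<in> A)"

definition cauchy_wrt :: "('b \<Rightarrow> 'b \<Rightarrow> ennreal) \<Rightarrow> (nat \<Rightarrow> 'b) \<Rightarrow> bool" where
  "cauchy_wrt d s \<longleftrightarrow> (\<forall>e>0. \<exists>N. \<forall>m\<ge>N. \<forall>n\<ge>N. d (s m) (s n) < ennreal e)"

definition converges_to_wrt :: "('b \<Rightarrow> 'b \<Rightarrow> ennreal) \<Rightarrow> (nat \<Rightarrow> 'b) \<Rightarrow> 'b \<Rightarrow> bool" where
  "converges_to_wrt d s l \<longleftrightarrow> (\<forall>e>0. \<exists>N. \<forall>n\<ge>N. d (s n) l < ennreal e)"

definition complete_wrt :: "('b \<Rightarrow> 'b \<Rightarrow> ennreal) \<Rightarrow> 'b set \<Rightarrow> bool" where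
  "complete_wrt d S \<longleftrightarrow> (\<forall>s. (\<forall>n. s n \<in> S) \<and> cauchy_wrt d s \<longrightarrow> (\<exists>l\<in>S. converges_to_wrt d s l))"

text \<open>A countable formal sum \<Sum>_{i\<in>I} x_i is represented by a countable index set
  I \<subseteq> nat together with a labelling x : nat \<Rightarrow> 'a (values outside I irrelevant).\<close>
type_synonym 'a diag = "nat set \<times> (nat \<Rightarrow> 'a)"

definition Dbar :: "'a set \<Rightarrow> 'a diag set" where
  "Dbar A = {\<alpha>. \<forall>i\<in>fst \<alpha>. snd \<alpha> i \<notin> A}"

definition is_matching :: "'a set \<Rightarrow> 'a diag \<Rightarrow> 'a diag \<Rightarrow> nat set \<Rightarrow> (nat \<Rightarrow> nat)
    \<Rightarrow> (nat \<Rightarrow> 'a) \<Rightarrow> (nat \<Rightarrow> 'a) \<Rightarrow> bool" where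
  "is_matching A \<alpha> \<beta> K \<phi> z w \<longleftrightarrow> K \<subseteq> fst \<alpha> \<and> inj_on \<phi> K \<and> \<phi> ` K \<subseteq> fst \<beta>
     \<and> (\<forall>i\<in>fst \<alpha> - K. z i \<in> A) \<and> (\<forall>j\<in>fst \<beta> - \<phi> ` K. w j \<in> A)"

definition matching_cost :: "('a \<Rightarrow> 'a \<Rightarrow> ennreal) \<Rightarrow> 'a diag \<Rightarrow> 'a diag \<Rightarrow> nat set \<Rightarrow> (nat \<Rightarrow> nat)
    \<Rightarrow> (nat \<Rightarrow> 'a) \<Rightarrow> (nat \<Rightarrow> 'a) \<Rightarrow> ennreal" where
  "matching_cost d \<alpha> \<beta> K \<phi> z w =
     sup (SUP k\<in>K. d (snd \<alpha> k) (snd \<beta> (\<phi> k)))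
       (sup (SUP i\<in>fst \<alpha> - K. d (snd \<alpha> i) (z i))
            (SUP j\<in>fst \<beta> - \<phi> ` K. d (w j) (snd \<beta> j)))"

definition W_inf :: "('a \<Rightarrow> 'a \<Rightarrow> ennreal) \<Rightarrow> 'a set \<Rightarrow> 'a diag \<Rightarrow> 'a diag \<Rightarrow> ennreal" where
  "W_inf d A \<alpha> \<beta> = (INF m\<in>{(K, \<phi>, z, w). is_matching A \<alpha> \<beta> K \<phi> z w}.
       (case m of (K, \<phi>, z, w) \<Rightarrow> matching_cost d \<alpha> \<beta> K \<phi> z w))"

definition u_delta :: "('a \<Rightarrow> 'a \<Rightarrow> ennreal) \<Rightarrow> 'a set \<Rightarrow> real \<Rightarrow> 'a diag \<Rightarrow> nat set" where
  "u_delta d A \<delta> \<alpha> = {i\<in>fst \<alpha>. \<not> dist_set d (snd \<alpha> i) A < ennreal \<delta>}"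

definition Dbar_inf :: "('a \<Rightarrow> 'a \<Rightarrow> ennreal) \<Rightarrow> 'a set \<Rightarrow> 'a diag set" where
  "Dbar_inf d A = {\<alpha>\<in>Dbar A. \<forall>\<delta>>0. finite (u_delta d A \<delta> \<alpha>)}"

end

theory Submission
  imports Defs
begin

(*
  Pass to a subsequence beta_k of the Cauchy sequence with W_inf(beta_k, beta_(k+1)) < 2^-k and fix
  matchings of cost at most 2^-k between consecutive terms. Following a point of beta_k through the
  successive matchings gives, as long as it is not sent to the diagonal, a sequence in X whose steps
  are bounded by 2^-k, 2^-(k+1), ..., hence a Cauchy sequence with a limit. The limit diagram has one
  point for each such surviving track whose limit lies off A. Matching every point of beta_n to the
  limit of its track, or to a nearby point of A when its track dies or converges into A, costs at
  most 4 * 2^-n. Finiteness of u_delta passes to the limit: under a matching of cost below delta/2,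
  every point at distance at least delta from A is paired with a point at distance at least delta/2.
*)

lemma ext_metric_triangle: "ext_metric d \<Longrightarrow> d x z \<le> d x y + d y z"
  by (simp add: ext_metric_def)

lemma ext_metric_sym: "ext_metric d \<Longrightarrow> d x y = d y x"
  by (simp add: ext_metric_def)

lemma ext_metric_refl: "ext_metric d \<Longrightarrow> d x x = 0"
  by (simp add: ext_metric_def)

lemma ext_metric_chain:
  assumes "ext_metric d" and "m \<le> n"
  shows "d (x m) (x n) \<le> (\<Sum>t\<in>{m..<n}. d (x t) (x (Suc t)))"
  using \<open>m \<le> n\<close>
proof (induction n rule: dec_induct)
  case base
  then show ?case by (simp add: ext_metric_refl[OF assms(1)])
next
  case (step n)
  have "d (x m) (x (Suc n)) \<le> d (x m) (x n) + d (x n) (x (Suc n))"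
    by (rule ext_metric_triangle[OF assms(1)])
  also have "\<dots> \<le> (\<Sum>t\<in>{m..<n}. d (x t) (x (Suc t))) + d (x n) (x (Suc n))"
    using step.IH by (rule add_right_mono)
  also have "\<dots> = (\<Sum>t\<in>{m..<Suc n}. d (x t) (x (Suc t)))"
    using step.hyps by simp
  finally show ?case .
qed

lemma dist_set_le: "a \<in> A \<Longrightarrow> dist_set d x A \<le> d x a"
  unfolding dist_set_def by (rule INF_lower)

lemma dist_set_lessE:
  assumes "dist_set d x A < c"
  obtains a where "a \<in> A" and "d x a < c"
  using assms unfolding dist_set_def INF_less_iff by blast

lemma half_power_sum_le: "(\<Sum>t\<in>{m..<n}. (1/2::real) ^ (k + t)) \<le> 2 * (1/2) ^ (k + m)"
proof (cases "m < n")
  case True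
  then have "{m..<n} = {m..n - 1}" by auto
  then have "(\<Sum>t\<in>{m..<n}. (1/2::real) ^ (k + t)) = (1/2) ^ k * (\<Sum>t\<in>{m..n - 1}. (1/2) ^ t)"
    by (simp add: power_add sum_distrib_left)
  also have "\<dots> = (1/2) ^ k * (2 * ((1/2) ^ m - (1/2) ^ n))"
    using True by (simp add: sum_gp)
  also have "\<dots> \<le> 2 * (1/2) ^ (k + m)"
    by (simp add: power_add)
  finally show ?thesis .
qed simp

lemma half_power_eventually_less:
  fixes c e :: real
  assumes "0 < e"
  shows "\<exists>N. \<forall>n\<ge>N. c * (1/2) ^ n < e"
proof -
  have "(\<lambda>n. c * (1/2::real) ^ n) \<longlonglongrightarrow> 0"
    by (intro tendsto_mult_right_zero LIMSEQ_power_zero) simp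
  then have "eventually (\<lambda>n. c * (1/2::real) ^ n < e) sequentially"
    using assms by (rule order_tendstoD(2))
  then show ?thesis by (simp add: eventually_sequentially)
qed

lemma cauchy_wrt_fast_subseq:
  assumes "cauchy_wrt D s"
  obtains N :: "nat \<Rightarrow> nat" where "mono N"
    and "\<And>k m n. N k \<le> m \<Longrightarrow> N k \<le> n \<Longrightarrow> D (s m) (s n) < ennreal ((1/2) ^ k)"
proof -
  have "\<forall>k. \<exists>M. \<forall>m\<ge>M. \<forall>n\<ge>M. D (s m) (s n) < ennreal ((1/2) ^ k)"
    using assms unfolding cauchy_wrt_def by simp
  then obtain M where M: "\<And>k m n. M k \<le> m \<Longrightarrow> M k \<le> n \<Longrightarrow> D (s m) (s n) < ennreal ((1/2) ^ k)"
    by metis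
  define N where "N k = Max (M ` {..k})" for k
  have "mono N"
    unfolding N_def by (intro monoI Max_mono) auto
  moreover have "M k \<le> N k" for k
    unfolding N_def by (intro Max_ge) auto
  ultimately show ?thesis using M that by (meson order_trans)
qed

lemma converges_to_wrt_if_close_to_fast_subseq:
  assumes triangle: "\<And>x y z. D x z \<le> D x y + D y z"
    and fast: "\<And>k n. N k \<le> n \<Longrightarrow> D (s n) (s (N k)) < ennreal ((1/2) ^ k)"
    and close: "\<And>k. D (s (N k)) l \<le> ennreal (c * (1/2) ^ k)" and "0 \<le> c"
  shows "converges_to_wrt D s l"
  unfolding converges_to_wrt_def
proof (intro allI impI)
  fix e :: real assume "0 < e"
  then obtain k where k: "(c + 1) * (1/2) ^ k < e"
    using half_power_eventually_less[of e "c + 1"] by auto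
  have "D (s n) l < ennreal e" if "N k \<le> n" for n
  proof -
    have "D (s n) l \<le> D (s n) (s (N k)) + D (s (N k)) l" by (rule triangle)
    also have "\<dots> \<le> ennreal ((1/2) ^ k) + ennreal (c * (1/2) ^ k)"
      using less_imp_le[OF fast[OF that]] close[of k] by (rule add_mono)
    also have "\<dots> = ennreal ((c + 1) * (1/2) ^ k)"
      using \<open>0 \<le> c\<close> by (simp add: distrib_right flip: ennreal_plus)
    also have "\<dots> < ennreal e" using k \<open>0 < e\<close> by (intro ennreal_lessI)
    finally show ?thesis .
  qed
  then show "\<exists>N. \<forall>n\<ge>N. D (s n) l < ennreal e" by blast
qed

section \<open>Matchings and the bottleneck distance\<close>

lemma matching_cost_le_iff:
  "matching_cost d \<alpha> \<beta> K \<phi> z w \<le> c \<longleftrightarrow>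
     (\<forall>k\<in>K. d (snd \<alpha> k) (snd \<beta> (\<phi> k)) \<le> c) \<and>
     (\<forall>i\<in>fst \<alpha> - K. d (snd \<alpha> i) (z i) \<le> c) \<and>
     (\<forall>j\<in>fst \<beta> - \<phi> ` K. d (w j) (snd \<beta> j) \<le> c)"
  by (simp add: matching_cost_def SUP_le_iff)

lemma dist_le_matching_cost_matched:
    "k \<in> K \<Longrightarrow> d (snd \<alpha> k) (snd \<beta> (\<phi> k)) \<le> matching_cost d \<alpha> \<beta> K \<phi> z w"
  and dist_le_matching_cost_right:
    "j \<in> fst \<beta> - \<phi> ` K \<Longrightarrow> d (w j) (snd \<beta> j) \<le> matching_cost d \<alpha> \<beta> K \<phi> z w"
  using order_refl[of "matching_cost d \<alpha> \<beta> K \<phi> z w"] unfolding matching_cost_le_iff by blast+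

lemma W_inf_le_matching_cost:
  assumes "is_matching A \<alpha> \<beta> K \<phi> z w"
  shows "W_inf d A \<alpha> \<beta> \<le> matching_cost d \<alpha> \<beta> K \<phi> z w"
  unfolding W_inf_def by (rule INF_lower2[of "(K, \<phi>, z, w)"]) (use assms in auto)

lemma W_inf_lessE:
  assumes "W_inf d A \<alpha> \<beta> < c"
  obtains K \<phi> z w where "is_matching A \<alpha> \<beta> K \<phi> z w" and "matching_cost d \<alpha> \<beta> K \<phi> z w < c"
  using assms unfolding W_inf_def INF_less_iff by auto

lemma is_matching_compose:
  assumes m1: "is_matching A \<alpha> \<beta> K1 \<phi>1 z1 w1" and m2: "is_matching A \<beta> \<gamma> K2 \<phi>2 z2 w2"
  shows "is_matching A \<alpha> \<gamma> {i\<in>K1. \<phi>1 i \<in> K2} (\<phi>2 \<circ> \<phi>1)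
           (\<lambda>i. if i \<in> K1 then z2 (\<phi>1 i) else z1 i)
           (\<lambda>j. if j \<in> \<phi>2 ` K2 then w1 (inv_into K2 \<phi>2 j) else w2 j)"
  unfolding is_matching_def
proof (intro conjI ballI)
  show "{i\<in>K1. \<phi>1 i \<in> K2} \<subseteq> fst \<alpha>" and "(\<phi>2 \<circ> \<phi>1) ` {i\<in>K1. \<phi>1 i \<in> K2} \<subseteq> fst \<gamma>"
    using m1 m2 by (auto simp: is_matching_def)
  show "inj_on (\<phi>2 \<circ> \<phi>1) {i\<in>K1. \<phi>1 i \<in> K2}"
    using m1 m2 unfolding is_matching_def by (intro comp_inj_on) (auto intro: inj_on_subset)
  fix i assume "i \<in> fst \<alpha> - {i\<in>K1. \<phi>1 i \<in> K2}"
  then show "(if i \<in> K1 then z2 (\<phi>1 i) else z1 i) \<in> A"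
    using m1 m2 by (auto simp: is_matching_def)
next
  fix j assume j: "j \<in> fst \<gamma> - (\<phi>2 \<circ> \<phi>1) ` {i\<in>K1. \<phi>1 i \<in> K2}"
  show "(if j \<in> \<phi>2 ` K2 then w1 (inv_into K2 \<phi>2 j) else w2 j) \<in> A"
  proof (cases "j \<in> \<phi>2 ` K2")
    case True
    then obtain k where k: "k \<in> K2" "j = \<phi>2 k" by auto
    with m2 have "inv_into K2 \<phi>2 j = k" by (simp add: is_matching_def inv_into_f_f)
    moreover have "k \<notin> \<phi>1 ` K1" using k j by auto
    ultimately show ?thesis using True k m1 m2 by (auto simp: is_matching_def)
  next
    case False
    then show ?thesis using j m2 by (auto simp: is_matching_def)
  qed
qed

lemma matching_cost_compose:
  assumes em: "ext_metric d"
    and m1: "is_matching A \<alpha> \<beta> K1 \<phi>1 z1 w1" and c1: "matching_cost d \<alpha> \<beta> K1 \<phi>1 z1 w1 \<le> a"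
    and m2: "is_matching A \<beta> \<gamma> K2 \<phi>2 z2 w2" and c2: "matching_cost d \<beta> \<gamma> K2 \<phi>2 z2 w2 \<le> b"
  shows "matching_cost d \<alpha> \<gamma> {i\<in>K1. \<phi>1 i \<in> K2} (\<phi>2 \<circ> \<phi>1)
           (\<lambda>i. if i \<in> K1 then z2 (\<phi>1 i) else z1 i)
           (\<lambda>j. if j \<in> \<phi>2 ` K2 then w1 (inv_into K2 \<phi>2 j) else w2 j) \<le> a + b"
proof -
  have via: "d p r \<le> a + b" if "d p q \<le> a" "d q r \<le> b" for p q r
    using ext_metric_triangle[OF em, of p r q] add_mono[OF that] by (rule order_trans)
  note C1 = c1[unfolded matching_cost_le_iff] and C2 = c2[unfolded matching_cost_le_iff]
  show ?thesis
    unfolding matching_cost_le_iff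
  proof (intro conjI ballI)
    fix k assume "k \<in> {i\<in>K1. \<phi>1 i \<in> K2}"
    then show "d (snd \<alpha> k) (snd \<gamma> ((\<phi>2 \<circ> \<phi>1) k)) \<le> a + b"
      using C1 C2 by (intro via[of _ "snd \<beta> (\<phi>1 k)"]) auto
  next
    fix i assume i: "i \<in> fst \<alpha> - {i\<in>K1. \<phi>1 i \<in> K2}"
    show "d (snd \<alpha> i) (if i \<in> K1 then z2 (\<phi>1 i) else z1 i) \<le> a + b"
    proof (cases "i \<in> K1")
      case True
      then have "\<phi>1 i \<in> fst \<beta> - K2" using i m1 by (auto simp: is_matching_def)
      then show ?thesis using True C1 C2 by (intro via[of _ "snd \<beta> (\<phi>1 i)"]) auto
    next
      case False
      with i C1 have "d (snd \<alpha> i) (z1 i) \<le> a" by auto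
      then show ?thesis using False by (simp add: add_increasing2)
    qed
  next
    fix j assume j: "j \<in> fst \<gamma> - (\<phi>2 \<circ> \<phi>1) ` {i\<in>K1. \<phi>1 i \<in> K2}"
    show "d (if j \<in> \<phi>2 ` K2 then w1 (inv_into K2 \<phi>2 j) else w2 j) (snd \<gamma> j) \<le> a + b"
    proof (cases "j \<in> \<phi>2 ` K2")
      case True
      then obtain k where k: "k \<in> K2" "j = \<phi>2 k" by auto
      with m2 have "inv_into K2 \<phi>2 j = k" by (simp add: is_matching_def inv_into_f_f)
      moreover have "k \<in> fst \<beta> - \<phi>1 ` K1" using k j m2 by (auto simp: is_matching_def)
      ultimately show ?thesis using True k C1 C2 by (intro via[of _ "snd \<beta> k"]) auto
    next
      case False
      with j C2 have "d (w2 j) (snd \<gamma> j) \<le> b" by auto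
      then show ?thesis using False by (simp add: add_increasing)
    qed
  qed
qed

lemma W_inf_triangle:
  assumes em: "ext_metric d"
  shows "W_inf d A \<alpha> \<gamma> \<le> W_inf d A \<alpha> \<beta> + W_inf d A \<beta> \<gamma>"
proof (rule ennreal_le_epsilon)
  fix e :: real
  assume fin: "W_inf d A \<alpha> \<beta> + W_inf d A \<beta> \<gamma> < top" and e: "0 < e"
  have half: "x < x + ennreal (e/2)" if "x < top" for x :: ennreal
    using that e ennreal_add_left_cancel_less[of x 0 "ennreal (e/2)"] by simp
  obtain K1 \<phi>1 z1 w1 where m1: "is_matching A \<alpha> \<beta> K1 \<phi>1 z1 w1"
    and c1: "matching_cost d \<alpha> \<beta> K1 \<phi>1 z1 w1 < W_inf d A \<alpha> \<beta> + ennreal (e/2)"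
    using half fin by (meson W_inf_lessE ennreal_add_less_top)
  obtain K2 \<phi>2 z2 w2 where m2: "is_matching A \<beta> \<gamma> K2 \<phi>2 z2 w2"
    and c2: "matching_cost d \<beta> \<gamma> K2 \<phi>2 z2 w2 < W_inf d A \<beta> \<gamma> + ennreal (e/2)"
    using half fin by (meson W_inf_lessE ennreal_add_less_top)
  have "W_inf d A \<alpha> \<gamma> \<le> (W_inf d A \<alpha> \<beta> + ennreal (e/2)) + (W_inf d A \<beta> \<gamma> + ennreal (e/2))"
    using W_inf_le_matching_cost[OF is_matching_compose[OF m1 m2]]
      matching_cost_compose[OF em m1 less_imp_le[OF c1] m2 less_imp_le[OF c2]]
    by (rule order_trans)
  also have "\<dots> = W_inf d A \<alpha> \<beta> + W_inf d A \<beta> \<gamma> + ennreal e"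
    using e by (simp add: ac_simps flip: ennreal_plus)
  finally show "W_inf d A \<alpha> \<gamma> \<le> W_inf d A \<alpha> \<beta> + W_inf d A \<beta> \<gamma> + ennreal e" .
qed

lemma finite_u_delta_if_W_inf_less:
  assumes em: "ext_metric d" and W: "W_inf d A \<alpha> \<gamma> < ennreal (\<delta>/2)"
    and fin: "finite (u_delta d A (\<delta>/2) \<alpha>)"
  shows "finite (u_delta d A \<delta> \<gamma>)"
proof -
  obtain K \<phi> z w where m: "is_matching A \<alpha> \<gamma> K \<phi> z w"
    and c: "matching_cost d \<alpha> \<gamma> K \<phi> z w < ennreal (\<delta>/2)"
    using W_inf_lessE[OF W] by blast
  have "0 < ennreal (\<delta>/2)" using c by (rule le_less_trans[OF zero_le])
  then have "0 < \<delta>" by simp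
  then have half_delta: "ennreal (\<delta>/2) + ennreal (\<delta>/2) = ennreal \<delta>"
    by (simp flip: ennreal_plus)
  have "u_delta d A \<delta> \<gamma> \<subseteq> \<phi> ` (u_delta d A (\<delta>/2) \<alpha> \<inter> K)"
  proof
    fix p assume p: "p \<in> u_delta d A \<delta> \<gamma>"
    then have pI: "p \<in> fst \<gamma>" and far: "\<not> dist_set d (snd \<gamma> p) A < ennreal \<delta>"
      by (auto simp: u_delta_def)
    show "p \<in> \<phi> ` (u_delta d A (\<delta>/2) \<alpha> \<inter> K)"
    proof (cases "p \<in> \<phi> ` K")
      case False
      with m pI have "w p \<in> A" by (simp add: is_matching_def)
      have "d (w p) (snd \<gamma> p) < ennreal (\<delta>/2)"
        using dist_le_matching_cost_right[of p \<gamma> \<phi> K d w \<alpha> z] pI False c by simp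
      with \<open>w p \<in> A\<close> have "dist_set d (snd \<gamma> p) A < ennreal (\<delta>/2)"
        using dist_set_le[of "w p" A d "snd \<gamma> p"] ext_metric_sym[OF em, of "w p"] by simp
      also have "\<dots> \<le> ennreal \<delta>"
        using \<open>0 < \<delta>\<close> by (intro ennreal_leI) simp
      finally have "dist_set d (snd \<gamma> p) A < ennreal \<delta>" .
      with far show ?thesis by contradiction
    next
      case True
      then obtain i where i: "i \<in> K" "p = \<phi> i" by auto
      have "\<not> dist_set d (snd \<alpha> i) A < ennreal (\<delta>/2)"
      proof
        assume "dist_set d (snd \<alpha> i) A < ennreal (\<delta>/2)"
        then obtain a where a: "a \<in> A" "d (snd \<alpha> i) a < ennreal (\<delta>/2)"
          by (rule dist_set_lessE)
        have "d (snd \<gamma> p) (snd \<alpha> i) < ennreal (\<delta>/2)"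
          using dist_le_matching_cost_matched[OF i(1), of d \<alpha> \<gamma> \<phi> z w] c i(2)
            ext_metric_sym[OF em, of "snd \<gamma> p"] by simp
        from add_strict_mono[OF this a(2)]
        have "d (snd \<gamma> p) (snd \<alpha> i) + d (snd \<alpha> i) a < ennreal \<delta>"
          by (simp only: half_delta)
        then have "dist_set d (snd \<gamma> p) A < ennreal \<delta>"
          using dist_set_le[OF a(1)] ext_metric_triangle[OF em, of "snd \<gamma> p" a "snd \<alpha> i"]
          by (meson order_le_less_trans)
        with far show False by contradiction
      qed
      then show ?thesis using i m by (auto simp: u_delta_def is_matching_def)
    qed
  qed
  moreover have "finite (\<phi> ` (u_delta d A (\<delta>/2) \<alpha> \<inter> K))" using fin by simp
  ultimately show ?thesis by (rule finite_subset)
qed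

section \<open>Tracks through a chain of matchings\<close>

locale matching_chain =
  fixes d :: "'a \<Rightarrow> 'a \<Rightarrow> ennreal" and A :: "'a set" and \<beta> :: "nat \<Rightarrow> 'a diag"
    and K :: "nat \<Rightarrow> nat set" and \<phi> :: "nat \<Rightarrow> nat \<Rightarrow> nat" and z w :: "nat \<Rightarrow> nat \<Rightarrow> 'a"
  assumes ext_metric: "ext_metric d" and complete: "complete_wrt d UNIV"
    and chain_matching: "\<And>k. is_matching A (\<beta> k) (\<beta> (Suc k)) (K k) (\<phi> k) (z k) (w k)"
    and chain_cost: "\<And>k. matching_cost d (\<beta> k) (\<beta> (Suc k)) (K k) (\<phi> k) (z k) (w k) \<le> ennreal ((1/2) ^ k)"
begin

abbreviation I :: "nat \<Rightarrow> nat set" where "I k \<equiv> fst (\<beta> k)"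
abbreviation X :: "nat \<Rightarrow> nat \<Rightarrow> 'a" where "X k \<equiv> snd (\<beta> k)"

lemma K_subset: "K k \<subseteq> I k"
  and inj_on_\<phi>: "inj_on (\<phi> k) (K k)"
  and \<phi>_image: "\<phi> k ` K k \<subseteq> I (Suc k)"
  and z_in_A: "i \<in> I k \<Longrightarrow> i \<notin> K k \<Longrightarrow> z k i \<in> A"
  and w_in_A: "j \<in> I (Suc k) \<Longrightarrow> j \<notin> \<phi> k ` K k \<Longrightarrow> w k j \<in> A"
  using chain_matching[of k] by (auto simp: is_matching_def)

lemma dist_matched: "i \<in> K k \<Longrightarrow> d (X k i) (X (Suc k) (\<phi> k i)) \<le> ennreal ((1/2) ^ k)"
  and dist_z: "i \<in> I k \<Longrightarrow> i \<notin> K k \<Longrightarrow> d (X k i) (z k i) \<le> ennreal ((1/2) ^ k)"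
  and dist_w: "j \<in> I (Suc k) \<Longrightarrow> j \<notin> \<phi> k ` K k \<Longrightarrow> d (w k j) (X (Suc k) j) \<le> ennreal ((1/2) ^ k)"
  using chain_cost[of k] unfolding matching_cost_le_iff by auto

text \<open>\<open>track k i t\<close> is the index at level \<open>k + t\<close> reached from the point \<open>i\<close> of level \<open>k\<close>
  by following the matchings, and \<open>None\<close> once the point has been sent to the diagonal.\<close>
primrec track :: "nat \<Rightarrow> nat \<Rightarrow> nat \<Rightarrow> nat option" where
  "track k i 0 = Some i"
| "track k i (Suc t) =
     Option.bind (track k i t) (\<lambda>j. if j \<in> K (k + t) then Some (\<phi> (k + t) j) else None)"

lemma track_Suc_eq_Some:
  "track k i (Suc t) = Some j \<longleftrightarrow> (\<exists>j'. track k i t = Some j' \<and> j' \<in> K (k + t) \<and> j = \<phi> (k + t) j')"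
  by (cases "track k i t") auto

lemma track_Suc_eq_None:
  "track k i (Suc t) = None \<longleftrightarrow> track k i t = None \<or> (\<exists>j. track k i t = Some j \<and> j \<notin> K (k + t))"
  by (cases "track k i t") auto

declare track.simps(2) [simp del]

lemma track_in_I: "i \<in> I k \<Longrightarrow> track k i t = Some j \<Longrightarrow> j \<in> I (k + t)"
proof (induction t arbitrary: j)
  case (Suc t)
  then obtain j' where "track k i t = Some j'" "j' \<in> K (k + t)" "j = \<phi> (k + t) j'"
    by (auto simp: track_Suc_eq_Some)
  with Suc.IH[OF Suc.prems(1)] show ?case using \<phi>_image[of "k + t"] by auto
qed simp

lemma track_None_mono:
  assumes "track k i t = None" and "t \<le> t'"
  shows "track k i t' = None"
  using assms(2) by (induction t' rule: dec_induct) (simp_all add: assms(1) track_Suc_eq_None)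

lemma track_NoneE:
  assumes "track k i T = None"
  obtains t e where "track k i t = Some e" and "e \<notin> K (k + t)"
  using assms
proof (induction T)
  case (Suc T)
  show ?case
  proof (cases "track k i T")
    case None
    with Suc.IH Suc.prems(1) show ?thesis by blast
  next
    case (Some e)
    with Suc.prems show ?thesis by (auto simp: track_Suc_eq_None)
  qed
qed simp

definition track_point :: "nat \<Rightarrow> nat \<Rightarrow> nat \<Rightarrow> 'a" where
  "track_point k i t = X (k + t) (the (track k i t))"

lemma dist_track_point_Suc:
  assumes "track k i (Suc t) \<noteq> None"
  shows "d (track_point k i t) (track_point k i (Suc t)) \<le> ennreal ((1/2) ^ (k + t))"
proof -
  obtain j where "track k i (Suc t) = Some j" using assms by blast
  moreover from this obtain j' where "track k i t = Some j'" "j' \<in> K (k + t)" "j = \<phi> (k + t) j'"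
    by (auto simp: track_Suc_eq_Some)
  ultimately show ?thesis
    using dist_matched[of j' "k + t"] by (simp add: track_point_def)
qed

lemma dist_track_point:
  assumes "track k i t' \<noteq> None" and "t \<le> t'"
  shows "d (track_point k i t) (track_point k i t') \<le> ennreal (2 * (1/2) ^ (k + t))"
proof -
  have "d (track_point k i t) (track_point k i t')
      \<le> (\<Sum>s\<in>{t..<t'}. d (track_point k i s) (track_point k i (Suc s)))"
    by (rule ext_metric_chain[OF ext_metric assms(2)])
  also have "\<dots> \<le> (\<Sum>s\<in>{t..<t'}. ennreal ((1/2) ^ (k + s)))"
  proof (rule sum_mono)
    fix s assume "s \<in> {t..<t'}"
    then have "Suc s \<le> t'" by simp
    have "track k i (Suc s) \<noteq> None"
    proof
      assume "track k i (Suc s) = None"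
      then have "track k i t' = None" using \<open>Suc s \<le> t'\<close> by (rule track_None_mono)
      with assms(1) show False by contradiction
    qed
    then show "d (track_point k i s) (track_point k i (Suc s)) \<le> ennreal ((1/2) ^ (k + s))"
      by (rule dist_track_point_Suc)
  qed
  also have "\<dots> = ennreal (\<Sum>s\<in>{t..<t'}. (1/2) ^ (k + s))"
    by (rule sum_ennreal) simp
  also have "\<dots> \<le> ennreal (2 * (1/2) ^ (k + t))"
    by (intro ennreal_leI half_power_sum_le)
  finally show ?thesis .
qed

definition survives :: "nat \<Rightarrow> nat \<Rightarrow> bool" where
  "survives k i \<longleftrightarrow> (\<forall>t. track k i t \<noteq> None)"

lemma cauchy_track_point:
  assumes "survives k i"
  shows "cauchy_wrt d (track_point k i)"
  unfolding cauchy_wrt_def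
proof (intro allI impI)
  fix e :: real assume "0 < e"
  then obtain N where N: "\<And>n. n \<ge> N \<Longrightarrow> 2 * (1/2) ^ n < e"
    using half_power_eventually_less[of e 2] by blast
  have close: "d (track_point k i m) (track_point k i n) < ennreal e"
    if "N \<le> m" "m \<le> n" for m n
  proof -
    have "track k i n \<noteq> None" using assms by (simp add: survives_def)
    then have "d (track_point k i m) (track_point k i n) \<le> ennreal (2 * (1/2) ^ (k + m))"
      using \<open>m \<le> n\<close> by (rule dist_track_point)
    also have "\<dots> < ennreal e"
      using N[of "k + m"] \<open>N \<le> m\<close> \<open>0 < e\<close> by (simp add: ennreal_lessI)
    finally show ?thesis .
  qed
  have "d (track_point k i m) (track_point k i n) < ennreal e" if "N \<le> m" "N \<le> n" for m n
  proof (cases "m \<le> n")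
    case True
    then show ?thesis using close \<open>N \<le> m\<close> by blast
  next
    case False
    then have "d (track_point k i n) (track_point k i m) < ennreal e"
      using close \<open>N \<le> n\<close> by simp
    then show ?thesis by (simp add: ext_metric_sym[OF ext_metric])
  qed
  then show "\<exists>N. \<forall>m\<ge>N. \<forall>n\<ge>N. d (track_point k i m) (track_point k i n) < ennreal e"
    by blast
qed

definition track_limit :: "nat \<Rightarrow> nat \<Rightarrow> 'a" where
  "track_limit k i = (SOME y. converges_to_wrt d (track_point k i) y)"

lemma converges_track_limit:
  "survives k i \<Longrightarrow> converges_to_wrt d (track_point k i) (track_limit k i)"
  using complete cauchy_track_point[of k i] unfolding complete_wrt_def track_limit_def
  by (metis UNIV_I someI_ex)

lemma dist_track_point_limit:
  assumes "survives k i"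
  shows "d (track_point k i t) (track_limit k i) \<le> ennreal (2 * (1/2) ^ (k + t))"
proof (rule ennreal_le_epsilon)
  fix e :: real assume "0 < e"
  then obtain N where N: "\<And>n. n \<ge> N \<Longrightarrow> d (track_point k i n) (track_limit k i) < ennreal e"
    using converges_track_limit[OF assms] unfolding converges_to_wrt_def by blast
  define n where "n = max N t"
  then have "N \<le> n" and "t \<le> n" by simp_all
  have "d (track_point k i t) (track_limit k i)
      \<le> d (track_point k i t) (track_point k i n) + d (track_point k i n) (track_limit k i)"
    by (rule ext_metric_triangle[OF ext_metric])
  also have "\<dots> \<le> ennreal (2 * (1/2) ^ (k + t)) + ennreal e"
    using assms \<open>t \<le> n\<close> less_imp_le[OF N[OF \<open>N \<le> n\<close>]] unfolding survives_def
    by (intro add_mono dist_track_point) auto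
  finally show "d (track_point k i t) (track_limit k i) \<le> ennreal (2 * (1/2) ^ (k + t)) + ennreal e" .
qed

lemma dying_track_near_A:
  assumes "j \<in> I k" and "track k j t = Some i" and "\<not> survives k j"
  shows "\<exists>a\<in>A. d (X (k + t) i) a \<le> ennreal (3 * (1/2) ^ (k + t))"
proof -
  obtain T where "track k j T = None" using assms(3) by (auto simp: survives_def)
  then obtain t' e where e: "track k j t' = Some e" and eK: "e \<notin> K (k + t')"
    by (rule track_NoneE)
  have "t < Suc t'"
  proof (rule ccontr)
    assume "\<not> t < Suc t'"
    moreover have "track k j (Suc t') = None" using e eK by (simp add: track_Suc_eq_None)
    ultimately show False using assms(2) track_None_mono[of k j "Suc t'" t] by simp
  qed
  have eI: "e \<in> I (k + t')" by (rule track_in_I[OF assms(1) e])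
  have "d (X (k + t) i) (z (k + t') e)
      \<le> d (X (k + t) i) (X (k + t') e) + d (X (k + t') e) (z (k + t') e)"
    by (rule ext_metric_triangle[OF ext_metric])
  also have "\<dots> \<le> ennreal (2 * (1/2) ^ (k + t)) + ennreal ((1/2) ^ (k + t'))"
  proof (rule add_mono)
    show "d (X (k + t) i) (X (k + t') e) \<le> ennreal (2 * (1/2) ^ (k + t))"
      using dist_track_point[of k j t' t] e assms(2) \<open>t < Suc t'\<close> by (simp add: track_point_def)
    show "d (X (k + t') e) (z (k + t') e) \<le> ennreal ((1/2) ^ (k + t'))"
      by (rule dist_z[OF eI eK])
  qed
  also have "\<dots> \<le> ennreal (3 * (1/2) ^ (k + t))"
    using \<open>t < Suc t'\<close> by (simp flip: ennreal_plus add: ennreal_leI power_decreasing)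
  finally show ?thesis using z_in_A[OF eI eK] by blast
qed

section \<open>The limit diagram\<close>

definition born :: "nat \<Rightarrow> nat \<Rightarrow> bool" where
  "born k j \<longleftrightarrow> j \<in> I k \<and> (k = 0 \<or> j \<notin> \<phi> (k - 1) ` K (k - 1))"

fun origin :: "nat \<Rightarrow> nat \<Rightarrow> nat \<times> nat" where
  "origin 0 i = (0, i)"
| "origin (Suc n) i =
     (if i \<in> \<phi> n ` K n then origin n (inv_into (K n) (\<phi> n) i) else (Suc n, i))"

lemma origin_tracks:
  "i \<in> I n \<Longrightarrow> origin n i = (k, j) \<Longrightarrow> k \<le> n \<and> born k j \<and> track k j (n - k) = Some i"
proof (induction n arbitrary: i)
  case 0
  then show ?case by (simp add: born_def)
next
  case (Suc n)
  show ?case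
  proof (cases "i \<in> \<phi> n ` K n")
    case True
    define i' where "i' = inv_into (K n) (\<phi> n) i"
    have i': "i' \<in> K n" "\<phi> n i' = i"
      using True by (auto simp: i'_def inv_into_into f_inv_into_f)
    have "origin n i' = (k, j)" using Suc.prems(2) True by (simp add: i'_def)
    with i' K_subset have IH: "k \<le> n" "born k j" "track k j (n - k) = Some i'"
      using Suc.IH by blast+
    then have "track k j (Suc n - k) = Some i"
      using i' by (simp add: Suc_diff_le track_Suc_eq_Some)
    with IH show ?thesis by simp
  next
    case False
    then show ?thesis using Suc.prems by (auto simp: born_def)
  qed
qed

lemma origin_track: "born k j \<Longrightarrow> track k j t = Some i \<Longrightarrow> origin (k + t) i = (k, j)"
proof (induction t arbitrary: i)
  case 0
  then show ?case by (cases k) (auto simp: born_def)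
next
  case (Suc t)
  then obtain i' where i': "track k j t = Some i'" "i' \<in> K (k + t)" "i = \<phi> (k + t) i'"
    by (auto simp: track_Suc_eq_Some)
  then have "inv_into (K (k + t)) (\<phi> (k + t)) i = i'"
    using inj_on_\<phi> by (simp add: inv_into_f_f)
  then show ?case using i' Suc.IH[OF Suc.prems(1) i'(1)] by simp
qed

lemma inj_on_origin: "inj_on (origin n) (I n)"
proof (rule inj_onI)
  fix i i' assume "i \<in> I n" "i' \<in> I n" "origin n i = origin n i'"
  then show "i = i'"
    using origin_tracks[of i n] origin_tracks[of i' n] by (metis option.inject surj_pair)
qed

text \<open>The limit diagram has one point for every track that survives and whose limit lies off \<open>A\<close>,
  indexed by the level and index at which the track is born.\<close>
definition limit_index :: "nat set" where
  "limit_index = {prod_encode (k, j) | k j. born k j \<and> survives k j \<and> track_limit k j \<notin> A}"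

definition limit_diagram :: "'a diag" where
  "limit_diagram = (limit_index, \<lambda>p. case_prod track_limit (prod_decode p))"

lemma limit_diagram_in_Dbar: "limit_diagram \<in> Dbar A"
  unfolding Dbar_def limit_diagram_def limit_index_def by auto

definition matched_to_limit :: "nat \<Rightarrow> nat set" where
  "matched_to_limit n =
     {i \<in> I n. case_prod survives (origin n i) \<and> case_prod track_limit (origin n i) \<notin> A}"

lemma dist_track_limit:
  assumes "i \<in> I n" and "origin n i = (k, j)" and "survives k j"
  shows "d (X n i) (track_limit k j) \<le> ennreal (2 * (1/2) ^ n)"
proof -
  have "k \<le> n" and "track k j (n - k) = Some i" using origin_tracks[OF assms(1,2)] by auto
  then show ?thesis
    using dist_track_point_limit[OF assms(3), of "n - k"] by (simp add: track_point_def)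
qed

lemma unmatched_point_near_A:
  assumes "i \<in> I n" and "i \<notin> matched_to_limit n"
  shows "\<exists>a\<in>A. d (X n i) a \<le> ennreal (4 * (1/2) ^ n)"
proof -
  obtain k j where o: "origin n i = (k, j)" by fastforce
  then have "k \<le> n" and "born k j" and tr: "track k j (n - k) = Some i"
    using origin_tracks[OF assms(1)] by auto
  show ?thesis
  proof (cases "survives k j")
    case True
    then have "track_limit k j \<in> A" using assms o by (simp add: matched_to_limit_def)
    moreover have "d (X n i) (track_limit k j) \<le> ennreal (4 * (1/2) ^ n)"
      using dist_track_limit[OF assms(1) o True] by (rule order_trans) (simp add: ennreal_leI)
    ultimately show ?thesis by blast
  next
    case False
    have "j \<in> I k" using \<open>born k j\<close> by (simp add: born_def)
    from dying_track_near_A[OF this tr False] \<open>k \<le> n\<close>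
    obtain a where "a \<in> A" and "d (X n i) a \<le> ennreal (3 * (1/2) ^ n)" by auto
    moreover have "ennreal (3 * (1/2) ^ n) \<le> ennreal (4 * (1/2) ^ n)" by (simp add: ennreal_leI)
    ultimately show ?thesis by (meson order_trans)
  qed
qed

lemma born_track_limit_near_A:
  assumes "born (Suc k) j" and "survives (Suc k) j"
  shows "\<exists>a\<in>A. d a (track_limit (Suc k) j) \<le> ennreal (2 * (1/2) ^ k)"
proof -
  have jI: "j \<in> I (Suc k)" and jK: "j \<notin> \<phi> k ` K k" using assms(1) by (auto simp: born_def)
  have "d (w k j) (track_limit (Suc k) j)
      \<le> d (w k j) (X (Suc k) j) + d (X (Suc k) j) (track_limit (Suc k) j)"
    by (rule ext_metric_triangle[OF ext_metric])
  also have "\<dots> \<le> ennreal ((1/2) ^ k) + ennreal (2 * (1/2) ^ Suc k)"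
    using dist_w[OF jI jK] dist_track_point_limit[OF assms(2), of 0]
    by (intro add_mono) (simp_all add: track_point_def)
  also have "\<dots> = ennreal (2 * (1/2) ^ k)"
    by (simp flip: ennreal_plus)
  finally show ?thesis using w_in_A[OF jI jK] by blast
qed

lemma unmatched_limit_point_near_A:
  assumes "p \<in> limit_index" and "p \<notin> (prod_encode \<circ> origin n) ` matched_to_limit n"
  shows "\<exists>a\<in>A. d a (snd limit_diagram p) \<le> ennreal (4 * (1/2) ^ n)"
proof -
  obtain k j where p: "p = prod_encode (k, j)" and kj: "born k j" "survives k j" "track_limit k j \<notin> A"
    using assms(1) unfolding limit_index_def by blast
  have "n < k"
  proof (rule ccontr)
    assume "\<not> n < k"
    then have n: "k + (n - k) = n" by simp
    obtain i where tr: "track k j (n - k) = Some i"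
      using kj(2) unfolding survives_def by blast
    have "j \<in> I k" using kj(1) by (simp add: born_def)
    from track_in_I[OF this tr] n have "i \<in> I n" by simp
    moreover have "origin n i = (k, j)" using origin_track[OF kj(1) tr] n by simp
    ultimately have "i \<in> matched_to_limit n" and "p = (prod_encode \<circ> origin n) i"
      using kj p by (simp_all add: matched_to_limit_def)
    with assms(2) show False by blast
  qed
  then obtain k' where k: "k = Suc k'" and "n \<le> k'"
    by (metis Suc_le_eq less_imp_Suc_add le_add1)
  obtain a where "a \<in> A" and "d a (track_limit k j) \<le> ennreal (2 * (1/2) ^ k')"
    using born_track_limit_near_A[of k' j] kj k by blast
  note \<open>d a (track_limit k j) \<le> ennreal (2 * (1/2) ^ k')\<close>
  also have "\<dots> \<le> ennreal (4 * (1/2) ^ n)"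
  proof (intro ennreal_leI)
    have "(1/2::real) ^ k' \<le> (1/2) ^ n" using \<open>n \<le> k'\<close> by (intro power_decreasing) auto
    moreover have "(0::real) \<le> (1/2) ^ n" by simp
    ultimately show "2 * (1/2::real) ^ k' \<le> 4 * (1/2) ^ n" by linarith
  qed
  finally show ?thesis using \<open>a \<in> A\<close> p by (auto simp: limit_diagram_def)
qed

lemma matched_to_limitE:
  assumes "i \<in> matched_to_limit n"
  obtains k j where "i \<in> I n" and "origin n i = (k, j)" and "born k j" and "survives k j"
    and "track_limit k j \<notin> A"
proof -
  obtain k j where o: "origin n i = (k, j)" by fastforce
  moreover have "i \<in> I n" using assms by (simp add: matched_to_limit_def)
  moreover from this o have "born k j" using origin_tracks by blast
  ultimately show ?thesis using that assms by (simp add: matched_to_limit_def)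
qed

lemma W_inf_limit_diagram: "W_inf d A (\<beta> n) limit_diagram \<le> ennreal (4 * (1/2) ^ n)"
proof -
  let ?\<phi> = "prod_encode \<circ> origin n"
  have "\<forall>i\<in>I n - matched_to_limit n. \<exists>a. a \<in> A \<and> d (X n i) a \<le> ennreal (4 * (1/2) ^ n)"
    using unmatched_point_near_A by blast
  then obtain z' where z': "\<forall>i\<in>I n - matched_to_limit n.
      z' i \<in> A \<and> d (X n i) (z' i) \<le> ennreal (4 * (1/2) ^ n)"
    by (rule bchoice[elim_format]) blast
  have "\<forall>p\<in>limit_index - ?\<phi> ` matched_to_limit n.
      \<exists>a. a \<in> A \<and> d a (snd limit_diagram p) \<le> ennreal (4 * (1/2) ^ n)"
    using unmatched_limit_point_near_A by blast
  then obtain w' where w': "\<forall>p\<in>limit_index - ?\<phi> ` matched_to_limit n.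
      w' p \<in> A \<and> d (w' p) (snd limit_diagram p) \<le> ennreal (4 * (1/2) ^ n)"
    by (rule bchoice[elim_format]) blast
  have sub: "matched_to_limit n \<subseteq> I n" by (auto simp: matched_to_limit_def)
  have "is_matching A (\<beta> n) limit_diagram (matched_to_limit n) ?\<phi> z' w'"
    unfolding is_matching_def
  proof (intro conjI ballI)
    show "inj_on ?\<phi> (matched_to_limit n)"
      using inj_on_subset[OF inj_on_origin sub] by (rule comp_inj_on) (rule inj_prod_encode)
    show "?\<phi> ` matched_to_limit n \<subseteq> fst limit_diagram"
    proof
      fix p assume "p \<in> ?\<phi> ` matched_to_limit n"
      then obtain i where "i \<in> matched_to_limit n" "p = ?\<phi> i" by blast
      then show "p \<in> fst limit_diagram"
        by (elim matched_to_limitE) (auto simp: limit_diagram_def limit_index_def)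
    qed
  qed (use sub z' w' in \<open>auto simp: limit_diagram_def\<close>)
  moreover have "matching_cost d (\<beta> n) limit_diagram (matched_to_limit n) ?\<phi> z' w'
      \<le> ennreal (4 * (1/2) ^ n)"
    unfolding matching_cost_le_iff
  proof (intro conjI ballI)
    fix i assume "i \<in> matched_to_limit n"
    then obtain k j where "i \<in> I n" and o: "origin n i = (k, j)" and "born k j"
      and "survives k j" and "track_limit k j \<notin> A"
      by (rule matched_to_limitE)
    from \<open>i \<in> I n\<close> o \<open>survives k j\<close> have "d (X n i) (track_limit k j) \<le> ennreal (2 * (1/2) ^ n)"
      by (rule dist_track_limit)
    also have "\<dots> \<le> ennreal (4 * (1/2) ^ n)" by (simp add: ennreal_leI)
    finally show "d (X n i) (snd limit_diagram (?\<phi> i)) \<le> ennreal (4 * (1/2) ^ n)"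
      using o by (simp add: limit_diagram_def)
  qed (use z' w' in \<open>auto simp: limit_diagram_def\<close>)
  ultimately show ?thesis by (meson W_inf_le_matching_cost order_trans)
qed

end

lemma W_inf_fast_chain_limit:
  assumes em: "ext_metric d" and complete: "complete_wrt d UNIV"
    and in_D: "\<And>k. \<beta> k \<in> Dbar_inf d A"
    and fast: "\<And>k. W_inf d A (\<beta> k) (\<beta> (Suc k)) < ennreal ((1/2) ^ k)"
  obtains L where "L \<in> Dbar_inf d A" and "\<And>k. W_inf d A (\<beta> k) L \<le> ennreal (4 * (1/2) ^ k)"
proof -
  have "\<forall>k. \<exists>K \<phi> z w. is_matching A (\<beta> k) (\<beta> (Suc k)) K \<phi> z w
      \<and> matching_cost d (\<beta> k) (\<beta> (Suc k)) K \<phi> z w \<le> ennreal ((1/2) ^ k)"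
    using fast by (meson W_inf_lessE less_imp_le)
  then obtain K \<phi> z w where "\<And>k. is_matching A (\<beta> k) (\<beta> (Suc k)) (K k) (\<phi> k) (z k) (w k)"
    and "\<And>k. matching_cost d (\<beta> k) (\<beta> (Suc k)) (K k) (\<phi> k) (z k) (w k) \<le> ennreal ((1/2) ^ k)"
    by metis
  then interpret matching_chain d A \<beta> K \<phi> z w
    using em complete by unfold_locales
  have L: "limit_diagram \<in> Dbar_inf d A"
    unfolding Dbar_inf_def
  proof (intro CollectI conjI allI impI limit_diagram_in_Dbar)
    fix \<delta> :: real assume "0 < \<delta>"
    then obtain N where N: "4 * (1/2) ^ N < \<delta>/2"
      using half_power_eventually_less[of "\<delta>/2" 4] by auto
    have "ennreal (4 * (1/2) ^ N) < ennreal (\<delta>/2)"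
      using N \<open>0 < \<delta>\<close> by (intro ennreal_lessI) auto
    with W_inf_limit_diagram[of N] have "W_inf d A (\<beta> N) limit_diagram < ennreal (\<delta>/2)"
      by (rule le_less_trans)
    moreover have "finite (u_delta d A (\<delta>/2) (\<beta> N))"
      using in_D[of N] \<open>0 < \<delta>\<close> by (simp add: Dbar_inf_def)
    ultimately show "finite (u_delta d A \<delta> limit_diagram)"
      by (rule finite_u_delta_if_W_inf_less[OF em])
  qed
  show ?thesis by (rule that[OF L W_inf_limit_diagram])
qed

theorem theorem6p3:
  fixes d :: "'a \<Rightarrow> 'a \<Rightarrow> ennreal" and A :: "'a set"
  assumes "ext_metric d" and "closed_wrt d A" and "complete_wrt d UNIV"
  shows "complete_wrt (W_inf d A) (Dbar_inf d A)"
  unfolding complete_wrt_def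
proof (intro allI impI, elim conjE)
  fix s assume s_in: "\<forall>n. s n \<in> Dbar_inf d A" and "cauchy_wrt (W_inf d A) s"
  from \<open>cauchy_wrt (W_inf d A) s\<close> obtain N where "mono N"
    and fast: "\<And>k m n. N k \<le> m \<Longrightarrow> N k \<le> n \<Longrightarrow> W_inf d A (s m) (s n) < ennreal ((1/2) ^ k)"
    by (rule cauchy_wrt_fast_subseq) blast
  have chain: "W_inf d A (s (N k)) (s (N (Suc k))) < ennreal ((1/2) ^ k)" for k
    using fast \<open>mono N\<close> by (simp add: mono_def)
  obtain L where L: "L \<in> Dbar_inf d A"
    and close: "\<And>k. W_inf d A (s (N k)) L \<le> ennreal (4 * (1/2) ^ k)"
    by (rule W_inf_fast_chain_limit[OF assms(1,3), where \<beta> = "\<lambda>k. s (N k)"])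
      (use s_in chain in auto)
  have "converges_to_wrt (W_inf d A) s L"
    using W_inf_triangle[OF assms(1)] fast close
    by (rule converges_to_wrt_if_close_to_fast_subseq) simp_all
  with L show "\<exists>l\<in>Dbar_inf d A. converges_to_wrt (W_inf d A) s l" by blast
qed

end
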